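(* Let $\mu=\min\{\kappa : 2^{\kappa}$ is not selectively sequentially separable$\}$. Then $\mu=\min\{\mathfrak{b},\mathfrak{q}\}$.
   Context: $2^\kappa$ denotes the Cantor cube $\{0,1\}^\kappa$ with the product topology. A space $Z$ is selectively sequentially separable if for every sequence $(D_n:n\in\mathbb{N})$ of sequentially dense subsets of $Z$ (sets such that every point of $Z$ is a limit of a sequence from the set) one can choose finite $F_n\subseteq D_n$ so that $\bigcup_n F_n$ is sequentially dense in $Z$. $\mathfrak{b}$ is the least cardinality of a subset of $\mathbb{N}^{\mathbb{N}}$ unbounded with respect to $\leq^*$ ($f\leq^* g$ iff $f(n)\leq g(n)$ for all but finitely many $n$). A $Q$-set is a subset of $\mathbb{R}$ each of whose subsets is a $G_\delta$ in it; $\mathfrak{q}$ is the smallest cardinal such that for every $\kappa<\mathfrak{q}$ there is a $Q$-set of size $\kappa$. *)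

theory Defs
  imports "HOL-Analysis.Analysis"
begin

definition cantor_cube :: "'a set \<Rightarrow> ('a \<Rightarrow> bool) topology" where
  "cantor_cube K = product_topology (\<lambda>_. discrete_topology (UNIV :: bool set)) K"

definition seq_dense :: "'a topology \<Rightarrow> 'a set \<Rightarrow> bool" where
  "seq_dense Z D \<longleftrightarrow> D \<subseteq> topspace Z \<and>
     (\<forall>z \<in> topspace Z. \<exists>s :: nat \<Rightarrow> 'a. range s \<subseteq> D \<and> limitin Z s z sequentially)"

definition sel_seq_separable :: "'a topology \<Rightarrow> bool" where
  "sel_seq_separable Z \<longleftrightarrow>
     (\<forall>D :: nat \<Rightarrow> 'a set. (\<forall>n. seq_dense Z (D n)) \<longrightarrow>
        (\<exists>F :: nat \<Rightarrow> 'a set. (\<forall>n. finite (F n) \<and> F n \<subseteq> D n) \<and>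
                               seq_dense Z (\<Union>n. F n)))"

definition unbounded_family :: "(nat \<Rightarrow> nat) set \<Rightarrow> bool" where
  "unbounded_family F \<longleftrightarrow>
     \<not> (\<exists>g :: nat \<Rightarrow> nat. \<forall>f \<in> F. eventually (\<lambda>n. f n \<le> g n) sequentially)"

definition below_b :: "'a set \<Rightarrow> bool" where
  "below_b K \<longleftrightarrow> (\<forall>F. unbounded_family F \<longrightarrow> ordLess2 (card_of K) (card_of F))"

definition qset :: "real set \<Rightarrow> bool" where
  "qset Q \<longleftrightarrow> (\<forall>A \<subseteq> Q. \<exists>U :: nat \<Rightarrow> real set.
                    (\<forall>n. open (U n)) \<and> A = Q \<inter> (\<Inter>n. U n))"

text \<open>|K| < q: there is a Q-set of size |K| (Q-sets are closed under subsets,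
  so the sizes of Q-sets form an initial segment of the cardinals and q is
  the least size of no Q-set).\<close>
definition below_q :: "'a set \<Rightarrow> bool" where
  "below_q K \<longleftrightarrow> (\<exists>Q. qset Q \<and> ordIso2 (card_of Q) (card_of K))"

definition below_min_bq :: "'a set \<Rightarrow> bool" where
  "below_min_bq K \<longleftrightarrow> below_b K \<and> below_q K"

end

theory Submission
  imports Defs
begin

text \<open>
  Both halves go through sequential separability of 2^K.

  If |K| < min(b, q), transport a Q-set of size |K| onto K. For a point z of 2^K the set
  where z is True is the trace of a G-delta set U_0, U_1, ...; approximating each coordinate
  by basic open sets inside U_0 \<inter> ... \<inter> U_n, and bounding by one function the indices needed
  (possible as |K| < b), gives a sequence from a countable set converging to z. A second
  b-bound, on the moduli of convergence towards the members of this countable set, selects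
  finitely many points from each sequentially dense set.

  Conversely, a sequentially dense sequence c_0, c_1, ... embeds K into the Cantor set via
  the ternary digits c_m(\<alpha>), and the image is a Q-set: a subset A consists of the points
  lying in infinitely many of the open sets cutting out the digit sets of c_(m_k), where
  c_(m_k) converges to the indicator of A. If moreover |K| \<ge> b, an unbounded family \<psi>
  indexed by K yields sequentially dense sets D_n (the c_m with the coordinates \<alpha> where
  j < \<psi>_\<alpha>(n) switched on) from which no finite selection is sequentially dense.

  So 2^K is selectively sequentially separable iff |K| < min(b, q), and a least failing |K|
  exists because |\<real>| \<ge> b.
\<close>

section \<open>Sequential separability and convergence in Cantor cubes\<close>

lemma limitin_discrete_topology_UNIV_iff:
  "limitin (discrete_topology UNIV) s l F \<longleftrightarrow> eventually (\<lambda>x. s x = l) F"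
proof
  assume "limitin (discrete_topology UNIV) s l F"
  then have "eventually (\<lambda>x. s x \<in> {l}) F"
    unfolding limitin_def by (metis discrete_topology_unique insertI1)
  then show "eventually (\<lambda>x. s x = l) F" by simp
qed (auto simp: limitin_def elim: eventually_mono)

lemma topspace_cantor_cube [simp]: "topspace (cantor_cube K) = (\<Pi>\<^sub>E \<alpha>\<in>K. UNIV)"
  by (simp add: cantor_cube_def)

lemma cantor_cube_nonempty: "topspace (cantor_cube K) \<noteq> {}"
  by (simp add: PiE_eq_empty_iff)

lemma limitin_cantor_cube_iff:
  "limitin (cantor_cube K) s z sequentially \<longleftrightarrow>
     z \<in> extensional K \<and> eventually (\<lambda>k. s k \<in> (\<Pi>\<^sub>E \<alpha>\<in>K. UNIV)) sequentially \<and>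
     (\<forall>\<alpha>\<in>K. eventually (\<lambda>k. s k \<alpha> = z \<alpha>) sequentially)"
  by (simp add: cantor_cube_def limitin_componentwise limitin_discrete_topology_UNIV_iff)

lemma limitin_cantor_cube_eventually_eq:
  assumes "limitin (cantor_cube K) s z sequentially"
    and "\<And>k. t k \<in> topspace (cantor_cube K)"
    and "\<And>\<alpha>. \<alpha> \<in> K \<Longrightarrow> eventually (\<lambda>k. t k \<alpha> = s k \<alpha>) sequentially"
  shows "limitin (cantor_cube K) t z sequentially"
proof -
  have "eventually (\<lambda>k. t k \<alpha> = z \<alpha>) sequentially" if "\<alpha> \<in> K" for \<alpha>
    using assms(1) assms(3)[OF that] that unfolding limitin_cantor_cube_iff
    by (auto elim: eventually_elim2)
  then show ?thesis
    using assms(1,2) unfolding limitin_cantor_cube_iff by auto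
qed

definition seq_separable :: "'a topology \<Rightarrow> bool" where
  "seq_separable Z \<longleftrightarrow> (\<exists>c :: nat \<Rightarrow> 'a. seq_dense Z (range c))"

lemma seq_dense_topspace: "seq_dense Z (topspace Z)"
  unfolding seq_dense_def by (auto intro: exI[of _ "\<lambda>_. _"])

lemma countable_seq_dense_imp_seq_separable:
  assumes "countable C" "seq_dense Z C" "topspace Z \<noteq> {}"
  shows "seq_separable Z"
proof -
  have "C \<noteq> {}"
    using assms(2,3) unfolding seq_dense_def by blast
  then show ?thesis
    using assms(1,2) unfolding seq_separable_def by (metis range_from_nat_into)
qed

lemma sel_seq_separable_imp_seq_separable:
  assumes "sel_seq_separable Z" "topspace Z \<noteq> {}"
  shows "seq_separable Z"
proof -
  obtain F :: "nat \<Rightarrow> 'a set" where "\<And>n. finite (F n)" "seq_dense Z (\<Union>n. F n)"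
    using assms(1) seq_dense_topspace unfolding sel_seq_separable_def by meson
  then show ?thesis
    using assms(2) by (intro countable_seq_dense_imp_seq_separable) (auto intro: countable_finite)
qed

lemma seq_dense_rangeE:
  assumes "seq_dense Z (range c)" "z \<in> topspace Z"
  obtains m :: "nat \<Rightarrow> nat" where "limitin Z (c \<circ> m) z sequentially"
proof -
  obtain s where s: "range s \<subseteq> range c" "limitin Z s z sequentially"
    using assms unfolding seq_dense_def by blast
  have "\<forall>k. \<exists>m. s k = c m"
    using s(1) by blast
  then obtain m where "\<And>k. s k = c (m k)"
    by metis
  then have "s = c \<circ> m"
    by auto
  with s that show ?thesis by blast
qed

section \<open>The bounding number\<close>

lemma unbounded_family_image_iff:
  "unbounded_family (\<phi> ` K) \<longleftrightarrow>
     (\<forall>G. \<exists>\<alpha>\<in>K. \<not> eventually (\<lambda>n. \<phi> \<alpha> n \<le> G n) sequentially)"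
  by (auto simp: unbounded_family_def)

lemma below_b_iff_bounded:
  "below_b K \<longleftrightarrow> (\<forall>\<phi> :: 'a \<Rightarrow> nat \<Rightarrow> nat. \<not> unbounded_family (\<phi> ` K))"
proof
  assume "below_b K"
  show "\<forall>\<phi> :: 'a \<Rightarrow> nat \<Rightarrow> nat. \<not> unbounded_family (\<phi> ` K)"
  proof (intro allI notI)
    fix \<phi> :: "'a \<Rightarrow> nat \<Rightarrow> nat"
    assume "unbounded_family (\<phi> ` K)"
    with \<open>below_b K\<close> have "ordLess2 (card_of K) (card_of (\<phi> ` K))"
      unfolding below_b_def by blast
    then show False
      using card_of_image not_ordLess_ordLeq by blast
  qed
next
  assume bounded: "\<forall>\<phi> :: 'a \<Rightarrow> nat \<Rightarrow> nat. \<not> unbounded_family (\<phi> ` K)"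
  show "below_b K"
    unfolding below_b_def
  proof (intro allI impI)
    fix F assume F: "unbounded_family F"
    show "ordLess2 (card_of K) (card_of F)"
    proof (rule ccontr)
      assume "\<not> ordLess2 (card_of K) (card_of F)"
      then have "ordLeq3 (card_of F) (card_of K)"
        using not_ordLess_iff_ordLeq[OF card_of_Well_order card_of_Well_order] by blast
      moreover have "F \<noteq> {}"
        using F unfolding unbounded_family_def by auto
      ultimately obtain \<phi> where "\<phi> ` K = F"
        using card_of_ordLeq2 by metis
      then show False
        using F bounded by blast
    qed
  qed
qed

lemma below_b_bounded:
  fixes \<phi> :: "'a \<Rightarrow> nat \<Rightarrow> nat"
  assumes "below_b K"
  obtains g where "\<And>\<alpha>. \<alpha> \<in> K \<Longrightarrow> eventually (\<lambda>n. \<phi> \<alpha> n \<le> g n) sequentially"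
  using assms unfolding below_b_iff_bounded unbounded_family_image_iff by blast

lemma unbounded_family_monotone_normalization:
  fixes \<phi> :: "'a \<Rightarrow> nat \<Rightarrow> nat"
  assumes unb: "unbounded_family (\<phi> ` K)"
  obtains \<psi> :: "'a \<Rightarrow> nat \<Rightarrow> nat"
  where "\<And>\<alpha>. mono (\<psi> \<alpha>)" "\<And>b. \<exists>\<alpha>\<in>K. b < \<psi> \<alpha> 0" "unbounded_family (\<psi> ` K)"
proof -
  have "\<exists>n0. \<forall>b. \<exists>\<alpha>\<in>K. b < \<phi> \<alpha> n0"
  proof (rule ccontr)
    assume "\<nexists>n0. \<forall>b. \<exists>\<alpha>\<in>K. b < \<phi> \<alpha> n0"
    then have "\<forall>n. \<exists>b. \<forall>\<alpha>\<in>K. \<phi> \<alpha> n \<le> b"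
      by (auto simp: not_less)
    then obtain G where "\<And>n \<alpha>. \<alpha> \<in> K \<Longrightarrow> \<phi> \<alpha> n \<le> G n"
      by metis
    moreover obtain \<alpha> where "\<alpha> \<in> K" "\<not> eventually (\<lambda>n. \<phi> \<alpha> n \<le> G n) sequentially"
      using unb unfolding unbounded_family_image_iff by blast
    ultimately show False
      by (simp add: always_eventually)
  qed
  then obtain n0 where n0: "\<And>b. \<exists>\<alpha>\<in>K. b < \<phi> \<alpha> n0"
    by blast
  define \<psi> where "\<psi> \<alpha> n = Max (\<phi> \<alpha> ` {..n + n0})" for \<alpha> n
  have \<phi>_le_\<psi>: "\<phi> \<alpha> i \<le> \<psi> \<alpha> n" if "i \<le> n + n0" for \<alpha> i n
    unfolding \<psi>_def using that by (intro Max_ge) auto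
  have "mono (\<psi> \<alpha>)" for \<alpha>
    unfolding \<psi>_def by (intro monoI Max_mono) auto
  moreover have "\<exists>\<alpha>\<in>K. b < \<psi> \<alpha> 0" for b
    using n0[of b] \<phi>_le_\<psi>[of n0 0] by (auto intro: less_le_trans)
  moreover have "unbounded_family (\<psi> ` K)"
    unfolding unbounded_family_image_iff
  proof
    fix G
    obtain \<alpha> where \<alpha>: "\<alpha> \<in> K" "\<not> eventually (\<lambda>n. \<phi> \<alpha> n \<le> G n) sequentially"
      using unb unfolding unbounded_family_image_iff by blast
    have "\<not> eventually (\<lambda>n. \<psi> \<alpha> n \<le> G n) sequentially"
    proof
      assume "eventually (\<lambda>n. \<psi> \<alpha> n \<le> G n) sequentially"
      then have "eventually (\<lambda>n. \<phi> \<alpha> n \<le> G n) sequentially"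
        by (rule eventually_mono) (use \<phi>_le_\<psi>[of n n \<alpha> for n] in \<open>auto intro: order_trans\<close>)
      with \<alpha>(2) show False ..
    qed
    with \<alpha>(1) show "\<exists>\<alpha>\<in>K. \<not> eventually (\<lambda>n. \<psi> \<alpha> n \<le> G n) sequentially"
      by blast
  qed
  ultimately show ?thesis
    using that by blast
qed

lemma filterlim_at_top_first_passage:
  fixes n :: "nat \<Rightarrow> nat"
  assumes "filterlim n at_top sequentially"
  obtains kk :: "nat \<Rightarrow> nat" where "\<And>m. m \<le> n (kk m)" "filterlim kk at_top sequentially"
proof
  have "\<exists>k. m \<le> n k" for m
    using assms unfolding filterlim_at_top by (meson eventually_sequentially order_refl)
  then show kk: "m \<le> n (LEAST k. m \<le> n k)" for m
    by (rule LeastI_ex)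
  show "filterlim (\<lambda>m. LEAST k. m \<le> n k) at_top sequentially"
    unfolding filterlim_at_top eventually_sequentially
  proof
    fix Z
    have "Z \<le> (LEAST k. m \<le> n k)" if "Suc (Max (n ` {..<Z})) \<le> m" for m
    proof (rule ccontr)
      assume "\<not> Z \<le> (LEAST k. m \<le> n k)"
      then have "n (LEAST k. m \<le> n k) \<le> Max (n ` {..<Z})"
        by (intro Max_ge) auto
      with kk[of m] that show False
        by simp
    qed
    then show "\<exists>N. \<forall>m\<ge>N. Z \<le> (LEAST k. m \<le> n k)"
      by blast
  qed
qed

lemma monotone_unbounded_not_dominated_along:
  fixes \<psi> :: "'a \<Rightarrow> nat \<Rightarrow> nat" and n j g :: "nat \<Rightarrow> nat"
  assumes mono: "\<And>\<alpha>. mono (\<psi> \<alpha>)" and large_at_0: "\<And>b. \<exists>\<alpha>\<in>K. b < \<psi> \<alpha> 0"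
    and unb: "unbounded_family (\<psi> ` K)" and bound: "\<And>k. j k \<le> g (n k)"
  shows "\<exists>\<alpha>\<in>K. \<not> eventually (\<lambda>k. \<psi> \<alpha> (n k) \<le> j k) sequentially"
proof (rule ccontr)
  assume "\<not> ?thesis"
  then have dom: "eventually (\<lambda>k. \<psi> \<alpha> (n k) \<le> j k) sequentially" if "\<alpha> \<in> K" for \<alpha>
    using that by blast
  \<comment> \<open>Either n k < N infinitely often, where j k is bounded through g and some \<psi> \<alpha> 0 is
    larger; or n tends to infinity, and \<psi> is compared with j along the first passage times of n.\<close>
  show False
  proof (cases "filterlim n at_top sequentially")
    case False
    then obtain N where "frequently (\<lambda>k. n k < N) sequentially"
      by (auto simp: filterlim_at_top not_eventually not_le)
    obtain \<alpha> where \<alpha>: "\<alpha> \<in> K" "Max (g ` {..<N}) < \<psi> \<alpha> 0"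
      using large_at_0 by blast
    obtain k where k: "\<psi> \<alpha> (n k) \<le> j k" "n k < N"
      using frequently_eventually_conj[OF \<open>frequently _ _\<close> dom[OF \<alpha>(1)]] frequently_ex by blast
    have "j k \<le> Max (g ` {..<N})"
      using bound[of k] k(2) by (meson Max_ge finite_imageI finite_lessThan imageI lessThan_iff order_trans)
    also have "\<dots> < \<psi> \<alpha> (n k)"
      using \<alpha>(2) mono[of \<alpha>] by (meson le0 less_le_trans monoD)
    finally show False
      using k(1) by simp
  next
    case True
    then obtain kk where kk: "\<And>m. m \<le> n (kk m)" and "filterlim kk at_top sequentially"
      using filterlim_at_top_first_passage by blast
    obtain \<alpha> where \<alpha>: "\<alpha> \<in> K" "\<not> eventually (\<lambda>m. \<psi> \<alpha> m \<le> j (kk m)) sequentially"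
      using unb[unfolded unbounded_family_image_iff, rule_format, of "\<lambda>m. j (kk m)"] by blast
    have "eventually (\<lambda>m. \<psi> \<alpha> (n (kk m)) \<le> j (kk m)) sequentially"
      using eventually_compose_filterlim[OF dom[OF \<alpha>(1)] \<open>filterlim kk at_top sequentially\<close>] .
    moreover have "frequently (\<lambda>m. j (kk m) < \<psi> \<alpha> m) sequentially"
      using \<alpha>(2) by (simp add: not_eventually not_le)
    ultimately obtain m where "\<psi> \<alpha> (n (kk m)) \<le> j (kk m)" "j (kk m) < \<psi> \<alpha> m"
      using frequently_eventually_conj frequently_ex by blast
    with monoD[OF mono[of \<alpha>] kk[of m]] show False
      by simp
  qed
qed

section \<open>Selective sequential separability below min(b, q)\<close>

lemma seq_dense_diagonal_selection:
  fixes c :: "nat \<Rightarrow> 'a \<Rightarrow> bool" and \<sigma> :: "nat \<Rightarrow> nat \<Rightarrow> nat \<Rightarrow> 'a \<Rightarrow> bool"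
  assumes c: "seq_dense (cantor_cube K) (range c)"
    and \<sigma>_top: "\<And>n m i. \<sigma> n m i \<in> topspace (cantor_cube K)"
    and J: "\<And>\<alpha> n m i. \<alpha> \<in> K \<Longrightarrow> J \<alpha> n m \<le> i \<Longrightarrow> \<sigma> n m i \<alpha> = c m \<alpha>"
    and g: "\<And>\<alpha>. \<alpha> \<in> K \<Longrightarrow> eventually (\<lambda>n. Max ((\<lambda>m. J \<alpha> n m) ` {..n}) \<le> g n) sequentially"
  shows "seq_dense (cantor_cube K) (\<Union>n. (\<lambda>m. \<sigma> n m (g n)) ` {..n})"
  unfolding seq_dense_def
proof (intro conjI ballI)
  show "(\<Union>n. (\<lambda>m. \<sigma> n m (g n)) ` {..n}) \<subseteq> topspace (cantor_cube K)"
    using \<sigma>_top by blast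
next
  fix z assume "z \<in> topspace (cantor_cube K)"
  with c obtain m where m: "limitin (cantor_cube K) (c \<circ> m) z sequentially"
    by (rule seq_dense_rangeE)
  define y where "y k = \<sigma> (m k + k) (m k) (g (m k + k))" for k
  have "limitin (cantor_cube K) y z sequentially"
    using m
  proof (rule limitin_cantor_cube_eventually_eq)
    show "y k \<in> topspace (cantor_cube K)" for k
      unfolding y_def by (rule \<sigma>_top)
  next
    fix \<alpha> assume "\<alpha> \<in> K"
    then obtain N where N: "\<And>n. N \<le> n \<Longrightarrow> Max ((\<lambda>m. J \<alpha> n m) ` {..n}) \<le> g n"
      using g unfolding eventually_sequentially by blast
    have "y k \<alpha> = c (m k) \<alpha>" if "N \<le> k" for k
    proof -
      have "J \<alpha> (m k + k) (m k) \<le> Max ((\<lambda>m'. J \<alpha> (m k + k) m') ` {..m k + k})"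
        by (rule Max_ge) auto
      also have "\<dots> \<le> g (m k + k)"
        using N that by simp
      finally show ?thesis
        unfolding y_def using J \<open>\<alpha> \<in> K\<close> by blast
    qed
    then show "eventually (\<lambda>k. y k \<alpha> = (c \<circ> m) k \<alpha>) sequentially"
      unfolding eventually_sequentially by auto
  qed
  moreover have "y k \<in> (\<lambda>m'. \<sigma> (m k + k) m' (g (m k + k))) ` {..m k + k}" for k
    unfolding y_def by simp
  then have "range y \<subseteq> (\<Union>n. (\<lambda>m. \<sigma> n m (g n)) ` {..n})"
    by blast
  ultimately show "\<exists>s. range s \<subseteq> (\<Union>n. (\<lambda>m. \<sigma> n m (g n)) ` {..n}) \<and> limitin (cantor_cube K) s z sequentially"
    by blast
qed

lemma seq_separable_below_b_imp_sel_seq_separable: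
  assumes sep: "seq_separable (cantor_cube K)" and b: "below_b K"
  shows "sel_seq_separable (cantor_cube K)"
  unfolding sel_seq_separable_def
proof (intro allI impI)
  fix D :: "nat \<Rightarrow> ('a \<Rightarrow> bool) set"
  assume D: "\<forall>n. seq_dense (cantor_cube K) (D n)"
  obtain c :: "nat \<Rightarrow> 'a \<Rightarrow> bool" where c: "seq_dense (cantor_cube K) (range c)"
    using sep unfolding seq_separable_def by blast
  have "\<forall>n m. \<exists>s. range s \<subseteq> D n \<and> limitin (cantor_cube K) s (c m) sequentially"
    using c D unfolding seq_dense_def by blast
  then obtain \<sigma> where \<sigma>: "\<And>n m. range (\<sigma> n m) \<subseteq> D n"
    "\<And>n m. limitin (cantor_cube K) (\<sigma> n m) (c m) sequentially"
    by metis
  have \<sigma>_top: "\<sigma> n m i \<in> topspace (cantor_cube K)" for n m i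
    using \<sigma>(1) D unfolding seq_dense_def by blast
  have "\<forall>\<alpha> n m. \<exists>N. \<alpha> \<in> K \<longrightarrow> (\<forall>i\<ge>N. \<sigma> n m i \<alpha> = c m \<alpha>)"
    using \<sigma>(2) unfolding limitin_cantor_cube_iff eventually_sequentially by blast
  then obtain J where J: "\<And>\<alpha> n m i. \<alpha> \<in> K \<Longrightarrow> J \<alpha> n m \<le> i \<Longrightarrow> \<sigma> n m i \<alpha> = c m \<alpha>"
    by metis
  obtain g where g: "\<And>\<alpha>. \<alpha> \<in> K \<Longrightarrow> eventually (\<lambda>n. Max ((\<lambda>m. J \<alpha> n m) ` {..n}) \<le> g n) sequentially"
    using below_b_bounded[OF b, of "\<lambda>\<alpha> n. Max ((\<lambda>m. J \<alpha> n m) ` {..n})"] by blast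
  have "seq_dense (cantor_cube K) (\<Union>n. (\<lambda>m. \<sigma> n m (g n)) ` {..n})"
    using seq_dense_diagonal_selection[where \<sigma> = \<sigma> and J = J, OF c \<sigma>_top J g] .
  moreover have "(\<lambda>m. \<sigma> n m (g n)) ` {..n} \<subseteq> D n" for n
    using \<sigma>(1) by blast
  ultimately show "\<exists>F. (\<forall>n. finite (F n) \<and> F n \<subseteq> D n) \<and> seq_dense (cantor_cube K) (\<Union>n. F n)"
    by (intro exI[of _ "\<lambda>n. (\<lambda>m. \<sigma> n m (g n)) ` {..n}"]) simp
qed

lemma qset_embedding_approximation:
  fixes h :: "'a \<Rightarrow> real" and B :: "nat \<Rightarrow> real set"
  assumes inj: "inj_on h K" and Q: "qset (h ` K)" and b: "below_b K"
    and B_cover: "\<And>S x. open S \<Longrightarrow> x \<in> S \<Longrightarrow> \<exists>i. x \<in> B i \<and> B i \<subseteq> S"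
    and z: "z \<in> topspace (cantor_cube K)"
  obtains I :: "nat \<Rightarrow> nat set" where "\<And>n. finite (I n)"
    "limitin (cantor_cube K) (\<lambda>n. restrict (\<lambda>\<alpha>. \<exists>i\<in>I n. h \<alpha> \<in> B i) K) z sequentially"
proof -
  have "h ` {\<alpha>\<in>K. z \<alpha>} \<subseteq> h ` K"
    by blast
  obtain U :: "nat \<Rightarrow> real set" where U_open: "\<forall>n. open (U n)" and U: "h ` {\<alpha>\<in>K. z \<alpha>} = h ` K \<inter> (\<Inter>n. U n)"
    using Q[unfolded qset_def, rule_format, OF \<open>_ \<subseteq> h ` K\<close>] by blast
  define V where "V n = (\<Inter>i\<le>n. U i)" for n
  have V_open: "open (V n)" for n
    unfolding V_def using U_open by auto
  define \<mu> where "\<mu> \<alpha> n = (LEAST i. h \<alpha> \<in> B i \<and> B i \<subseteq> V n)" for \<alpha> n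
  obtain g where g: "\<And>\<alpha>. \<alpha> \<in> K \<Longrightarrow> eventually (\<lambda>n. \<mu> \<alpha> n \<le> g n) sequentially"
    using below_b_bounded[OF b, of \<mu>] by blast
  define I where "I n = {i. i \<le> g n \<and> B i \<subseteq> V n}" for n
  have "limitin (cantor_cube K) (\<lambda>n. restrict (\<lambda>\<alpha>. \<exists>i\<in>I n. h \<alpha> \<in> B i) K) z sequentially"
  proof (rule limitin_cantor_cube_eventually_eq)
    show "limitin (cantor_cube K) (\<lambda>_. z) z sequentially"
      using z by simp
  next
    fix \<alpha> assume \<alpha>: "\<alpha> \<in> K"
    show "eventually (\<lambda>n. restrict (\<lambda>\<alpha>. \<exists>i\<in>I n. h \<alpha> \<in> B i) K \<alpha> = z \<alpha>) sequentially"
    proof (cases "z \<alpha>")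
      case True
      then have "h \<alpha> \<in> V n" for n
        using U \<alpha> unfolding V_def by blast
      then have \<mu>: "h \<alpha> \<in> B (\<mu> \<alpha> n) \<and> B (\<mu> \<alpha> n) \<subseteq> V n" for n
        unfolding \<mu>_def by (rule LeastI_ex[OF B_cover[OF V_open]])
      show ?thesis
        using g[OF \<alpha>]
      proof (rule eventually_mono)
        fix n assume "\<mu> \<alpha> n \<le> g n"
        with \<mu>[of n] True \<alpha> show "restrict (\<lambda>\<alpha>. \<exists>i\<in>I n. h \<alpha> \<in> B i) K \<alpha> = z \<alpha>"
          by (auto simp: I_def)
      qed
    next
      case False
      then have "h \<alpha> \<notin> h ` {\<alpha>\<in>K. z \<alpha>}"
        using inj \<alpha> by (auto simp: inj_on_def)
      then obtain i where "h \<alpha> \<notin> U i"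
        using U \<alpha> by blast
      then have "h \<alpha> \<notin> V n" if "i \<le> n" for n
        using that unfolding V_def by blast
      then have "restrict (\<lambda>\<alpha>. \<exists>i\<in>I n. h \<alpha> \<in> B i) K \<alpha> = z \<alpha>" if "i \<le> n" for n
        using that False \<alpha> by (auto simp: I_def)
      then show ?thesis
        unfolding eventually_sequentially by blast
    qed
  qed simp
  moreover have "finite (I n)" for n
    unfolding I_def by (auto simp: finite_nat_set_iff_bounded_le)
  ultimately show ?thesis
    using that by blast
qed

lemma qset_embedding_imp_seq_separable:
  fixes h :: "'a \<Rightarrow> real"
  assumes inj: "inj_on h K" and Q: "qset (h ` K)" and b: "below_b K"
  shows "seq_separable (cantor_cube K)"
proof -
  obtain B :: "nat \<Rightarrow> real set"
    where "\<And>S. open S \<Longrightarrow> \<exists>I. S = \<Union>{B i |i. i \<in> I}"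
    by (rule univ_second_countable_sequence) (rule that)
  then have B_cover: "\<exists>i. x \<in> B i \<and> B i \<subseteq> S" if "open S" "x \<in> S" for S x
    using that by blast
  define pt where "pt I = restrict (\<lambda>\<alpha>. \<exists>i\<in>I. h \<alpha> \<in> B i) K" for I :: "nat set"
  have "seq_dense (cantor_cube K) (pt ` {I. finite I})"
    unfolding seq_dense_def
  proof (intro conjI ballI)
    show "pt ` {I. finite I} \<subseteq> topspace (cantor_cube K)"
      by (auto simp: pt_def)
  next
    fix z assume "z \<in> topspace (cantor_cube K)"
    then obtain I where "\<And>n. finite (I n)" "limitin (cantor_cube K) (\<lambda>n. pt (I n)) z sequentially"
      using qset_embedding_approximation[OF inj Q b B_cover] unfolding pt_def by blast
    then show "\<exists>s. range s \<subseteq> pt ` {I. finite I} \<and> limitin (cantor_cube K) s z sequentially"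
      by (intro exI[of _ "\<lambda>n. pt (I n)"]) auto
  qed
  then show ?thesis
    by (intro countable_seq_dense_imp_seq_separable) (simp_all add: countable_Collect_finite PiE_eq_empty_iff)
qed

lemma below_b_below_q_imp_seq_separable:
  assumes "below_b K" "below_q K"
  shows "seq_separable (cantor_cube K)"
proof -
  obtain Q where "qset Q" "ordIso2 (card_of K) (card_of Q)"
    using assms(2) ordIso_symmetric unfolding below_q_def by blast
  then obtain h where "bij_betw h K Q"
    using card_of_ordIso by blast
  with \<open>qset Q\<close> assms(1) show ?thesis
    by (auto simp: bij_betw_def intro: qset_embedding_imp_seq_separable)
qed

section \<open>Sequential separability yields a Q-set\<close>

definition cantor_real :: "(nat \<Rightarrow> bool) \<Rightarrow> real" where
  "cantor_real a = (\<Sum>m. of_bool (a m) * 2 / 3 ^ Suc m)"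

lemma cantor_real_sums: "(\<lambda>m. of_bool (a m) * 2 / 3 ^ Suc m) sums cantor_real a"
proof -
  have "summable (\<lambda>m. 2 / 3 * (1 / 3 :: real) ^ m)"
    by (intro summable_mult summable_geometric) simp
  then have "summable (\<lambda>m. of_bool (a m) * 2 / 3 ^ Suc m :: real)"
    by (rule summable_comparison_test[rotated]) (auto simp: power_divide)
  then show ?thesis
    unfolding cantor_real_def by (rule summable_sums)
qed

lemma cantor_real_first_difference:
  assumes "\<And>i. i < k \<Longrightarrow> a i = b i" and "a k \<noteq> b k"
  shows "1 / 3 ^ Suc k \<le> \<bar>cantor_real a - cantor_real b\<bar>"
proof -
  define \<delta> :: "nat \<Rightarrow> real" where "\<delta> m = (of_bool (a m) - of_bool (b m)) * 2 / 3 ^ Suc m" for m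
  define D where "D = cantor_real a - cantor_real b"
  have "\<delta> sums D"
    unfolding D_def \<delta>_def using sums_diff[OF cantor_real_sums cantor_real_sums]
    by (simp add: diff_divide_distrib left_diff_distrib)
  then have "(\<lambda>i. \<delta> (i + k)) sums D"
    using assms(1) by (subst sums_zero_iff_shift) (auto simp: \<delta>_def)
  then have tail: "(\<lambda>i. \<delta> (Suc i + k)) sums (D - \<delta> k)"
    by (subst sums_Suc_iff) simp
  have geom: "(\<lambda>i. 2 / 3 ^ (Suc i + Suc k)) sums (1 / 3 ^ Suc k :: real)"
  proof -
    have "(\<lambda>i. 2 / 3 ^ (k + 2) * (1 / 3) ^ i) sums (2 / 3 ^ (k + 2) * (1 / (1 - 1 / 3)) :: real)"
      by (intro sums_mult geometric_sums) simp
    then show ?thesis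
      by (simp add: power_add power_divide mult_ac)
  qed
  have tail_bound: "\<bar>\<delta> (Suc i + k)\<bar> \<le> 2 / 3 ^ (Suc i + Suc k)" for i
    by (simp add: \<delta>_def)
  have "D - \<delta> k \<le> 1 / 3 ^ Suc k"
    by (rule sums_le[OF abs_le_D1[OF tail_bound] tail geom])
  moreover have "- (1 / 3 ^ Suc k) \<le> D - \<delta> k"
    by (rule sums_le[OF _ sums_minus[OF geom] tail]) (metis abs_le_D2 minus_le_iff tail_bound)
  moreover have "\<bar>\<delta> k\<bar> = 2 / 3 ^ Suc k"
    using assms(2) by (cases "a k") (auto simp: \<delta>_def)
  ultimately show ?thesis
    unfolding D_def by linarith
qed

lemma cantor_real_separation:
  assumes "a k \<noteq> b k"
  shows "1 / 3 ^ Suc k \<le> \<bar>cantor_real a - cantor_real b\<bar>"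
proof -
  define k0 where "k0 = (LEAST i. a i \<noteq> b i)"
  have "k0 \<le> k" "a k0 \<noteq> b k0"
    unfolding k0_def using assms by (rule Least_le, rule LeastI)
  have "1 / 3 ^ Suc k \<le> (1 / 3 ^ Suc k0 :: real)"
    using \<open>k0 \<le> k\<close> by (simp add: frac_le)
  also have "\<dots> \<le> \<bar>cantor_real a - cantor_real b\<bar>"
    using \<open>a k0 \<noteq> b k0\<close> not_less_Least unfolding k0_def
    by (intro cantor_real_first_difference) blast+
  finally show ?thesis .
qed

lemma inj_cantor_real: "inj cantor_real"
proof (rule injI, rule ccontr)
  fix a b assume "cantor_real a = cantor_real b" "a \<noteq> b"
  then obtain k where "a k \<noteq> b k" "\<bar>cantor_real a - cantor_real b\<bar> = 0"
    by auto
  moreover have "0 < (1 / 3 ^ Suc k :: real)"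
    by simp
  ultimately show False
    using cantor_real_separation[of a k b] by linarith
qed

lemma cantor_real_digit_open:
  fixes x :: "'a \<Rightarrow> nat \<Rightarrow> bool"
  obtains W :: "nat \<Rightarrow> real set"
  where "\<And>j. open (W j)" "\<And>\<alpha> j. cantor_real (x \<alpha>) \<in> W j \<longleftrightarrow> x \<alpha> j"
proof -
  define W where "W j = (\<Union>\<beta>\<in>{\<beta>. x \<beta> j}. ball (cantor_real (x \<beta>)) (1 / 3 ^ Suc j))" for j
  have "cantor_real (x \<alpha>) \<in> W j \<longleftrightarrow> x \<alpha> j" for \<alpha> j
  proof
    assume "cantor_real (x \<alpha>) \<in> W j"
    then obtain \<beta> where "x \<beta> j" "dist (cantor_real (x \<beta>)) (cantor_real (x \<alpha>)) < 1 / 3 ^ Suc j"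
      unfolding W_def by auto
    then show "x \<alpha> j"
      using cantor_real_separation[of "x \<alpha>" j "x \<beta>"] by (auto simp: dist_real_def abs_minus_commute)
  qed (auto simp: W_def)
  moreover have "open (W j)" for j
    unfolding W_def by blast
  ultimately show ?thesis
    using that by blast
qed

lemma seq_dense_range_pointwiseE:
  assumes "seq_dense (cantor_cube K) (range c)" "z \<in> topspace (cantor_cube K)"
  obtains m :: "nat \<Rightarrow> nat" where "\<And>\<alpha>. \<alpha> \<in> K \<Longrightarrow> eventually (\<lambda>k. c (m k) \<alpha> = z \<alpha>) sequentially"
proof -
  obtain m where "limitin (cantor_cube K) (c \<circ> m) z sequentially"
    using seq_dense_rangeE[OF assms] .
  then show ?thesis
    using that unfolding limitin_cantor_cube_iff by auto
qed

lemma inj_on_cantor_real_coordinates: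
  assumes c: "seq_dense (cantor_cube K) (range c)"
  shows "inj_on (\<lambda>\<alpha>. cantor_real (\<lambda>m. c m \<alpha>)) K"
proof (rule inj_onI, rule ccontr)
  fix \<alpha> \<beta> assume \<alpha>\<beta>: "\<alpha> \<in> K" "\<beta> \<in> K" "cantor_real (\<lambda>m. c m \<alpha>) = cantor_real (\<lambda>m. c m \<beta>)" "\<alpha> \<noteq> \<beta>"
  have "restrict (\<lambda>\<gamma>. \<gamma> = \<alpha>) K \<in> topspace (cantor_cube K)"
    by simp
  with c obtain m where m: "\<And>\<gamma>. \<gamma> \<in> K \<Longrightarrow> eventually (\<lambda>k. c (m k) \<gamma> = (\<gamma> = \<alpha>)) sequentially"
    by (rule seq_dense_range_pointwiseE) auto
  have "eventually (\<lambda>k. c (m k) \<alpha> \<and> \<not> c (m k) \<beta>) sequentially"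
    using m[OF \<alpha>\<beta>(1)] m[OF \<alpha>\<beta>(2)] by eventually_elim (use \<alpha>\<beta>(4) in auto)
  then obtain k where "c (m k) \<alpha> \<noteq> c (m k) \<beta>"
    using eventually_happens' sequentially_bot by blast
  moreover have "(\<lambda>m. c m \<alpha>) = (\<lambda>m. c m \<beta>)"
    using \<alpha>\<beta>(3) by (simp add: inj_eq[OF inj_cantor_real])
  ultimately show False
    by metis
qed

lemma qset_cantor_real_coordinates:
  assumes c: "seq_dense (cantor_cube K) (range c)"
  shows "qset ((\<lambda>\<alpha>. cantor_real (\<lambda>m. c m \<alpha>)) ` K)"
  unfolding qset_def
proof (intro allI impI)
  define e where "e \<alpha> = cantor_real (\<lambda>m. c m \<alpha>)" for \<alpha>
  obtain W where W_open: "\<And>j. open (W j)" and W_iff: "\<And>\<alpha> j. e \<alpha> \<in> W j \<longleftrightarrow> c j \<alpha>"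
    using cantor_real_digit_open[of "\<lambda>\<alpha> m. c m \<alpha>"] unfolding e_def by blast
  fix A assume A: "A \<subseteq> e ` K"
  have "restrict (\<lambda>\<alpha>. e \<alpha> \<in> A) K \<in> topspace (cantor_cube K)"
    by simp
  with c obtain m where m: "\<And>\<alpha>. \<alpha> \<in> K \<Longrightarrow> eventually (\<lambda>k. c (m k) \<alpha> = (e \<alpha> \<in> A)) sequentially"
    by (rule seq_dense_range_pointwiseE) auto
  define U where "U N = (\<Union>k\<in>{N..}. W (m k))" for N
  have "e \<alpha> \<in> (\<Inter>N. U N) \<longleftrightarrow> e \<alpha> \<in> A" if "\<alpha> \<in> K" for \<alpha>
  proof -
    have "e \<alpha> \<in> (\<Inter>N. U N) \<longleftrightarrow> frequently (\<lambda>k. c (m k) \<alpha>) sequentially"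
      using W_iff by (auto simp: U_def frequently_sequentially)
    also have "\<dots> \<longleftrightarrow> frequently (\<lambda>k. e \<alpha> \<in> A) sequentially"
      using m[OF that] by (rule frequently_cong) simp
    also have "\<dots> \<longleftrightarrow> e \<alpha> \<in> A"
      by simp
    finally show ?thesis .
  qed
  then have "A = e ` K \<inter> (\<Inter>N. U N)"
    using A by blast
  moreover have "open (U N)" for N
    unfolding U_def using W_open by blast
  ultimately show "\<exists>U :: nat \<Rightarrow> real set. (\<forall>n. open (U n)) \<and> A = e ` K \<inter> (\<Inter>n. U n)"
    by blast
qed

lemma seq_separable_imp_below_q:
  assumes "seq_separable (cantor_cube K)"
  shows "below_q K"
proof -
  obtain c :: "nat \<Rightarrow> 'a \<Rightarrow> bool" where c: "seq_dense (cantor_cube K) (range c)"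
    using assms unfolding seq_separable_def by blast
  have "ordIso2 (card_of ((\<lambda>\<alpha>. cantor_real (\<lambda>m. c m \<alpha>)) ` K)) (card_of K)"
    using card_of_ordIso[THEN iffD1, OF exI, OF inj_on_imp_bij_betw[OF inj_on_cantor_real_coordinates[OF c]]]
    by (rule ordIso_symmetric)
  with qset_cantor_real_coordinates[OF c] show ?thesis
    unfolding below_q_def by blast
qed

section \<open>Failure from b onwards\<close>

lemma seq_dense_switch_on_below:
  fixes c :: "nat \<Rightarrow> 'a \<Rightarrow> bool" and \<psi> :: "'a \<Rightarrow> nat"
  assumes c: "seq_dense (cantor_cube K) (range c)"
  shows "seq_dense (cantor_cube K) ((\<lambda>(m, j). restrict (\<lambda>\<alpha>. j < \<psi> \<alpha> \<or> c m \<alpha>) K) ` UNIV)"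
  unfolding seq_dense_def
proof (intro conjI ballI)
  show "(\<lambda>(m, j). restrict (\<lambda>\<alpha>. j < \<psi> \<alpha> \<or> c m \<alpha>) K) ` UNIV \<subseteq> topspace (cantor_cube K)"
    by auto
next
  fix z assume "z \<in> topspace (cantor_cube K)"
  with c obtain m where "limitin (cantor_cube K) (c \<circ> m) z sequentially"
    by (rule seq_dense_rangeE)
  then have "limitin (cantor_cube K) (\<lambda>k. restrict (\<lambda>\<alpha>. k < \<psi> \<alpha> \<or> c (m k) \<alpha>) K) z sequentially"
  proof (rule limitin_cantor_cube_eventually_eq)
    fix \<alpha> assume "\<alpha> \<in> K"
    show "eventually (\<lambda>k. restrict (\<lambda>\<alpha>. k < \<psi> \<alpha> \<or> c (m k) \<alpha>) K \<alpha> = (c \<circ> m) k \<alpha>) sequentially"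
      using eventually_ge_at_top[of "\<psi> \<alpha>"] by eventually_elim (simp add: \<open>\<alpha> \<in> K\<close>)
  qed simp
  moreover have "range (\<lambda>k. restrict (\<lambda>\<alpha>. k < \<psi> \<alpha> \<or> c (m k) \<alpha>) K)
      \<subseteq> (\<lambda>(m, j). restrict (\<lambda>\<alpha>. j < \<psi> \<alpha> \<or> c m \<alpha>) K) ` UNIV"
    by (auto intro: image_eqI[where x = "(m _, _)"])
  ultimately show "\<exists>s. range s \<subseteq> (\<lambda>(m, j). restrict (\<lambda>\<alpha>. j < \<psi> \<alpha> \<or> c m \<alpha>) K) ` UNIV
      \<and> limitin (cantor_cube K) s z sequentially"
    by blast
qed

lemma finite_subset_image_pair_bounded:
  fixes f :: "'a \<Rightarrow> nat \<Rightarrow> 'b"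
  assumes "finite F" "F \<subseteq> (\<lambda>(m, j). f m j) ` UNIV"
  obtains b where "\<And>x. x \<in> F \<Longrightarrow> \<exists>m j. j \<le> b \<and> x = f m j"
proof -
  obtain P where "finite P" and F: "F = (\<lambda>(m, j). f m j) ` P"
    using finite_subset_image[OF assms] by blast
  have "\<exists>m j. j \<le> Max (snd ` P) \<and> x = f m j" if "x \<in> F" for x
  proof -
    obtain m j where "(m, j) \<in> P" "x = f m j"
      using \<open>x \<in> F\<close> F by auto
    moreover have "j \<le> Max (snd ` P)"
      using \<open>finite P\<close> \<open>(m, j) \<in> P\<close> by (metis Max_ge finite_imageI image_eqI snd_conv)
    ultimately show ?thesis
      by blast
  qed
  then show ?thesis
    using that by blast
qed

lemma not_below_b_imp_not_sel_seq_separable: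
  assumes sep: "seq_separable (cantor_cube K)" and not_b: "\<not> below_b K"
  shows "\<not> sel_seq_separable (cantor_cube K)"
proof
  assume sss: "sel_seq_separable (cantor_cube K)"
  obtain c :: "nat \<Rightarrow> 'a \<Rightarrow> bool" where c: "seq_dense (cantor_cube K) (range c)"
    using sep unfolding seq_separable_def by blast
  obtain \<phi> :: "'a \<Rightarrow> nat \<Rightarrow> nat" where "unbounded_family (\<phi> ` K)"
    using not_b unfolding below_b_iff_bounded by blast
  then obtain \<psi> :: "'a \<Rightarrow> nat \<Rightarrow> nat" where \<psi>: "\<And>\<alpha>. mono (\<psi> \<alpha>)"
      "\<And>b. \<exists>\<alpha>\<in>K. b < \<psi> \<alpha> 0" "unbounded_family (\<psi> ` K)"
    using unbounded_family_monotone_normalization by metis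
  define d where "d n m j = restrict (\<lambda>\<alpha>. j < \<psi> \<alpha> n \<or> c m \<alpha>) K" for n m j
  define D where "D n = (\<lambda>(m, j). d n m j) ` UNIV" for n
  have "seq_dense (cantor_cube K) (D n)" for n
    unfolding D_def d_def by (rule seq_dense_switch_on_below[OF c])
  then obtain F where F: "\<And>n. finite (F n)" "\<And>n. F n \<subseteq> D n" "seq_dense (cantor_cube K) (\<Union>n. F n)"
    using sss unfolding sel_seq_separable_def by meson
  have "\<exists>b. \<forall>x\<in>F n. \<exists>m j. j \<le> b \<and> x = d n m j" for n
    using finite_subset_image_pair_bounded[OF F(1) F(2)[unfolded D_def]] by metis
  then obtain g where g: "\<And>n x. x \<in> F n \<Longrightarrow> \<exists>m j. j \<le> g n \<and> x = d n m j"
    by metis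
  have "restrict (\<lambda>_. False) K \<in> topspace (cantor_cube K)"
    by simp
  with F(3) obtain y where y: "range y \<subseteq> (\<Union>n. F n)"
      "limitin (cantor_cube K) y (restrict (\<lambda>_. False) K) sequentially"
    unfolding seq_dense_def by blast
  have "\<forall>k. \<exists>n m j. j \<le> g n \<and> y k = d n m j"
    using y(1) g by blast
  then obtain n m j where nmj: "\<And>k. j k \<le> g (n k)" "\<And>k. y k = d (n k) (m k) (j k)"
    by metis
  have "eventually (\<lambda>k. \<psi> \<alpha> (n k) \<le> j k) sequentially" if "\<alpha> \<in> K" for \<alpha>
    using y(2) that unfolding limitin_cantor_cube_iff
    by (auto simp: nmj(2) d_def not_less elim!: ballE[of _ _ \<alpha>] eventually_mono)
  with monotone_unbounded_not_dominated_along[where K = K and \<psi> = \<psi> and n = n and j = j and g = g, OF \<psi> nmj(1)]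
  show False
    by blast
qed

section \<open>The least failing cardinal\<close>

definition nat_fun_graph :: "(nat \<Rightarrow> nat) \<Rightarrow> nat \<Rightarrow> bool" where
  "nat_fun_graph f k \<longleftrightarrow> (\<exists>n. k = prod_encode (n, f n))"

lemma inj_nat_fun_graph: "inj nat_fun_graph"
proof (rule injI, rule ext)
  fix f g :: "nat \<Rightarrow> nat" and n
  assume "nat_fun_graph f = nat_fun_graph g"
  then have "nat_fun_graph g (prod_encode (n, f n))"
    by (metis nat_fun_graph_def)
  then show "f n = g n"
    by (auto simp: nat_fun_graph_def)
qed

lemma unbounded_family_UNIV: "unbounded_family UNIV"
  unfolding unbounded_family_def
proof
  assume "\<exists>g :: nat \<Rightarrow> nat. \<forall>f \<in> UNIV. eventually (\<lambda>n. f n \<le> g n) sequentially"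
  then obtain g :: "nat \<Rightarrow> nat" where "\<forall>f \<in> UNIV. eventually (\<lambda>n. f n \<le> g n) sequentially"
    by blast
  then have "eventually (\<lambda>n. Suc (g n) \<le> g n) sequentially"
    by (elim ballE[of _ _ "\<lambda>n. Suc (g n)"]) simp_all
  then show False
    by (simp add: eventually_sequentially)
qed

lemma not_below_b_real: "\<not> below_b (UNIV :: real set)"
proof
  assume "below_b (UNIV :: real set)"
  then have "ordLess2 (card_of (UNIV :: real set)) (card_of (UNIV :: (nat \<Rightarrow> nat) set))"
    using unbounded_family_UNIV unfolding below_b_def by (elim allE impE)
  moreover have "inj (cantor_real \<circ> nat_fun_graph)"
    using inj_cantor_real inj_nat_fun_graph by (rule inj_compose)
  then have "ordLeq3 (card_of (UNIV :: (nat \<Rightarrow> nat) set)) (card_of (UNIV :: real set))"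
    by (intro card_of_ordLeq[THEN iffD1] exI[of _ "cantor_real \<circ> nat_fun_graph"]) simp
  ultimately show False
    by (simp add: not_ordLess_ordLeq)
qed

lemma ex_card_minimal_counterexample:
  fixes K :: "'a set"
  assumes "\<not> P K"
  shows "\<exists>K :: 'a set. \<not> P K \<and> (\<forall>K'. ordLess2 (card_of K') (card_of K) \<longrightarrow> P K')"
proof -
  define S where "S = {card_of K | K. \<not> P K}"
  have "card_of K \<in> S"
    using assms unfolding S_def by blast
  then obtain r where "r \<in> S" and minimal: "\<And>r' :: 'a rel. (r', r) \<in> ordLess \<Longrightarrow> r' \<notin> S"
    using wfE_min[OF wf_ordLess] by blast
  then obtain K where "r = card_of K" "\<not> P K"
    unfolding S_def by blast
  with minimal show ?thesis
    unfolding S_def by blast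
qed

lemma sel_seq_separable_cantor_cube_iff:
  "sel_seq_separable (cantor_cube K) \<longleftrightarrow> below_min_bq K"
proof
  assume sss: "sel_seq_separable (cantor_cube K)"
  then have sep: "seq_separable (cantor_cube K)"
    using cantor_cube_nonempty by (rule sel_seq_separable_imp_seq_separable)
  moreover have "below_b K"
    using not_below_b_imp_not_sel_seq_separable[OF sep] sss by blast
  ultimately show "below_min_bq K"
    unfolding below_min_bq_def by (blast intro: seq_separable_imp_below_q)
next
  assume "below_min_bq K"
  then have b: "below_b K" and q: "below_q K"
    unfolding below_min_bq_def by simp_all
  show "sel_seq_separable (cantor_cube K)"
    using below_b_below_q_imp_seq_separable[OF b q] b by (rule seq_separable_below_b_imp_sel_seq_separable)
qed

theorem theorem5p2:
  shows "(\<forall>K :: 'a set. below_min_bq K \<longrightarrow> sel_seq_separable (cantor_cube K))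
       \<and> (\<exists>K :: real set. \<not> below_min_bq K
              \<and> (\<forall>K' :: real set. ordLess2 (card_of K') (card_of K) \<longrightarrow> below_min_bq K')
              \<and> \<not> sel_seq_separable (cantor_cube K))"
proof -
  have "\<not> below_min_bq (UNIV :: real set)"
    using not_below_b_real unfolding below_min_bq_def by simp
  then have "\<exists>K :: real set. \<not> below_min_bq K
      \<and> (\<forall>K' :: real set. ordLess2 (card_of K') (card_of K) \<longrightarrow> below_min_bq K')"
    by (rule ex_card_minimal_counterexample)
  then show ?thesis
    by (auto simp: sel_seq_separable_cantor_cube_iff)
qed

end
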